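(* In the setting described in the context, the following two-sided estimates hold: $$|J(u)-J(u_h^{(2)})|-|\mathcal{R}^{(3)}-\mathcal{R}^{(3)(2)}|\le|\eta_h-\eta_h^{(2)}|\le|J(u)-J(u_h^{(2)})|+|\mathcal{R}^{(3)}-\mathcal{R}^{(3)(2)}|,$$ and $$|J(u)-J(\tilde u)|-|\rho(\tilde u)(\tilde z)|-|\mathcal{R}^{(3)}|\le|\eta_h|\le|J(u)-J(\tilde u)|+|\rho(\tilde u)(\tilde z)|+|\mathcal{R}^{(3)}|.$$
   Context: Let $U$ and $V$ be real Banach spaces with dual $V^*$. Let $\mathcal{A}:U\to V^*$ be a (nonlinear) operator that is three times continuously Fréchet differentiable, and let $J:U\to\mathbb{R}$ be three times continuously Fréchet differentiable. Notation: $\mathcal{A}(w)(v)$ is the value of $\mathcal{A}(w)\in V^*$ at $v\in V$. For fixed $v$, $\mathcal{A}'(w)(\varphi,v)$, $\mathcal{A}''(w)(\varphi,\psi,v)$ and $\mathcal{A}'''(w)(\varphi,\psi,\chi,v)$ denote the first, second and third Fréchet derivatives of $w\mapsto\mathcal{A}(w)(v)$ at $w$ in the directions $\varphi,\psi,\chi\in U$. Analogously, $J'(w)(\varphi)$ and $J'''(w)(\varphi,\psi,\chi)$ denote derivatives of $J$. Let $u\in U$ satisfy $\mathcal{A}(u)(v)=0$ for all $v\in V$, and let $z\in V$ satisfy $\mathcal{A}'(u)(\varphi,z)=J'(u)(\varphi)$ for all $\varphi\in U$. Let $U_h^{(2)}\subset U$ and $V_h^{(2)}\subset V$ be finite-dimensional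 subspaces. Let $u_h^{(2)}\in U_h^{(2)}$ satisfy $\mathcal{A}(u_h^{(2)})(v)=0$ for all $v\in V_h^{(2)}$. Let $z_h^{(2)}\in V_h^{(2)}$ satisfy $\mathcal{A}'(u_h^{(2)})(\varphi,z_h^{(2)})=J'(u_h^{(2)})(\varphi)$ for all $\varphi\in U_h^{(2)}$. Let $\tilde u\in U_h^{(2)}$ and $\tilde z\in V_h^{(2)}$ be arbitrary fixed elements. Define $\rho(\tilde u)(v):=-\mathcal{A}(\tilde u)(v)$ and $\rho^*(\tilde u,\tilde z)(\varphi):=J'(\tilde u)(\varphi)-\mathcal{A}'(\tilde u)(\varphi,\tilde z)$. With $e:=u-\tilde u$ and $e^*:=z-\tilde z$, define $$\mathcal{R}^{(3)}:=\frac12\int_0^1\Big[J'''(\tilde u+se)(e,e,e)-\mathcal{A}'''(\tilde u+se)(e,e,e,\tilde z+se^* )-3\mathcal{A}''(\tilde u+se)(e,e,e^* )\Big]s(s-1)\,ds.$$ Let $\mathcal{R}^{(3)(2)}$ be the same expression with $e,e^*,z$ replaced by $e^{(2)}:=u_h^{(2)}-\tilde u$, $e^{(2),*}:=z_h^{(2)}-\tilde z$, $z_h^{(2)}$. Define $$\eta_h:=\tfrac12\rho(\tilde u)(z-\tilde z)+\tfrac12\rho^*(\tilde u,\tilde z)(u-\tilde u),\qquad \eta_h^{(2)}:=\tfrac12\rho(\tilde u)(z_h^{(2)}-\tilde z)+\tfrac12\rho^*(\tilde u,\tilde z)(u_h^{(2)}-\tilde u).$$ *)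

theory Defs
  imports "HOL-Analysis.Analysis"
begin

text \<open>Dual space V^* is rendered as the bounded linear functionals 'v \<Rightarrow>L real.
  Multilinear higher derivatives are curried bounded linear maps.\<close>

definition ap1 :: "('a::real_normed_vector \<Rightarrow>\<^sub>L 'b::real_normed_vector) \<Rightarrow> 'a \<Rightarrow> 'b"
  where "ap1 L x = blinfun_apply L x"

definition ap2 :: "('a::real_normed_vector \<Rightarrow>\<^sub>L 'b::real_normed_vector \<Rightarrow>\<^sub>L 'c::real_normed_vector)
   \<Rightarrow> 'a \<Rightarrow> 'b \<Rightarrow> 'c"
  where "ap2 L x y = blinfun_apply (blinfun_apply L x) y"

definition ap3 :: "('a::real_normed_vector \<Rightarrow>\<^sub>L 'b::real_normed_vector \<Rightarrow>\<^sub>L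
     'c::real_normed_vector \<Rightarrow>\<^sub>L 'd::real_normed_vector) \<Rightarrow> 'a \<Rightarrow> 'b \<Rightarrow> 'c \<Rightarrow> 'd"
  where "ap3 L x y w = blinfun_apply (blinfun_apply (blinfun_apply L x) y) w"

definition ap4 :: "('a::real_normed_vector \<Rightarrow>\<^sub>L 'b::real_normed_vector \<Rightarrow>\<^sub>L
     'c::real_normed_vector \<Rightarrow>\<^sub>L 'd::real_normed_vector \<Rightarrow>\<^sub>L 'e::real_normed_vector)
   \<Rightarrow> 'a \<Rightarrow> 'b \<Rightarrow> 'c \<Rightarrow> 'd \<Rightarrow> 'e"
  where "ap4 L x y w t = blinfun_apply (blinfun_apply (blinfun_apply (blinfun_apply L x) y) w) t"

definition R3 ::
  "('u::real_normed_vector \<Rightarrow> ('u \<Rightarrow>\<^sub>L 'u \<Rightarrow>\<^sub>L 'u \<Rightarrow>\<^sub>L real))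
   \<Rightarrow> ('u \<Rightarrow> ('u \<Rightarrow>\<^sub>L 'u \<Rightarrow>\<^sub>L 'v::real_normed_vector \<Rightarrow>\<^sub>L real))
   \<Rightarrow> ('u \<Rightarrow> ('u \<Rightarrow>\<^sub>L 'u \<Rightarrow>\<^sub>L 'u \<Rightarrow>\<^sub>L 'v \<Rightarrow>\<^sub>L real))
   \<Rightarrow> 'u \<Rightarrow> 'v \<Rightarrow> 'u \<Rightarrow> 'v \<Rightarrow> real"
  where "R3 J3 A2 A3 ut zt e es =
     1/2 * integral {0..1::real} (\<lambda>s.
        (ap3 (J3 (ut + s *\<^sub>R e)) e e e
         - ap4 (A3 (ut + s *\<^sub>R e)) e e e (zt + s *\<^sub>R es)
         - 3 * ap3 (A2 (ut + s *\<^sub>R e)) e e es) * (s * (s - 1)))"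

end

theory Submission
  imports Defs
begin

text \<open>Along the segment \<open>s \<mapsto> (ut + s e, zt + s e\<^sup>*)\<close> the Lagrangian
  \<open>L(w, y) = J(w) - A(w)(y)\<close> has third derivative equal to the integrand of \<open>R\<^sup>3\<close>, so two
  integrations by parts show that \<open>R\<^sup>3\<close> is the error of the trapezoidal rule for \<open>L\<close> on
  \<open>[0, 1]\<close>. At \<open>(u, z)\<close> the Lagrangian equals \<open>J\<close> and its derivative vanishes; the same holds
  at \<open>(uh2, zh2)\<close> in the discrete error directions. At \<open>(ut, zt)\<close> the derivative in the error
  direction is \<open>2 \<eta>\<close>. Hence \<open>J(u) - J(ut) = \<eta> + \<rho>(ut)(zt) + R\<^sup>3\<close>, likewise for \<open>uh2\<close>,
  and both estimates are the triangle inequality applied to these identities.\<close>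

lemma has_vector_derivative_along_line:
  assumes "(f has_derivative blinfun_apply F') (at (x + s *\<^sub>R e))"
  shows "((\<lambda>s. f (x + s *\<^sub>R e)) has_vector_derivative F' e) (at s)"
proof -
  have "((\<lambda>s::real. x + s *\<^sub>R e) has_vector_derivative e) (at s)"
    by (auto intro!: derivative_eq_intros)
  from vector_derivative_diff_chain_within[OF this has_derivative_at_withinI[OF assms]]
  show ?thesis by (simp add: o_def)
qed

lemma trapezoidal_rule_remainder:
  fixes g g1 g2 g3 :: "real \<Rightarrow> real"
  assumes "\<And>s. (g has_real_derivative g1 s) (at s)"
    and "\<And>s. (g1 has_real_derivative g2 s) (at s)"
    and "\<And>s. (g2 has_real_derivative g3 s) (at s)"
  shows "1/2 * integral {0..1} (\<lambda>s. g3 s * (s * (s - 1))) = g 1 - g 0 - (g1 0 + g1 1) / 2"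
proof -
  \<comment> \<open>an antiderivative of the integrand, found by integrating by parts twice\<close>
  define H where "H s = 1/2 * (g2 s * (s * (s - 1)) - g1 s * (2 * s - 1) + 2 * g s)" for s
  have "(H has_real_derivative 1/2 * (g3 s * (s * (s - 1)))) (at s)" for s
    unfolding H_def
    by (rule derivative_eq_intros assms refl)+ (simp add: algebra_simps)
  then have "((\<lambda>s. 1/2 * (g3 s * (s * (s - 1)))) has_integral (H 1 - H 0)) {0..1}"
    by (intro fundamental_theorem_of_calculus)
       (auto simp: has_real_derivative_iff_has_vector_derivative intro: has_vector_derivative_at_within)
  then have "1/2 * integral {0..1} (\<lambda>s. g3 s * (s * (s - 1))) = H 1 - H 0"
    by (metis integral_unique integral_mult_right)
  then show ?thesis by (simp add: H_def field_simps)
qed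

locale thrice_differentiable_lagrangian =
  fixes J :: "'u::real_normed_vector \<Rightarrow> real"
    and J1 :: "'u \<Rightarrow> ('u \<Rightarrow>\<^sub>L real)"
    and J2 :: "'u \<Rightarrow> ('u \<Rightarrow>\<^sub>L 'u \<Rightarrow>\<^sub>L real)"
    and J3 :: "'u \<Rightarrow> ('u \<Rightarrow>\<^sub>L 'u \<Rightarrow>\<^sub>L 'u \<Rightarrow>\<^sub>L real)"
    and A :: "'u \<Rightarrow> ('v::real_normed_vector \<Rightarrow>\<^sub>L real)"
    and A1 :: "'u \<Rightarrow> ('u \<Rightarrow>\<^sub>L 'v \<Rightarrow>\<^sub>L real)"
    and A2 :: "'u \<Rightarrow> ('u \<Rightarrow>\<^sub>L 'u \<Rightarrow>\<^sub>L 'v \<Rightarrow>\<^sub>L real)"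
    and A3 :: "'u \<Rightarrow> ('u \<Rightarrow>\<^sub>L 'u \<Rightarrow>\<^sub>L 'u \<Rightarrow>\<^sub>L 'v \<Rightarrow>\<^sub>L real)"
  assumes dJ: "\<And>w. (J has_derivative blinfun_apply (J1 w)) (at w)"
      and dJ1: "\<And>w. (J1 has_derivative blinfun_apply (J2 w)) (at w)"
      and dJ2: "\<And>w. (J2 has_derivative blinfun_apply (J3 w)) (at w)"
      and dA: "\<And>w. (A has_derivative blinfun_apply (A1 w)) (at w)"
      and dA1: "\<And>w. (A1 has_derivative blinfun_apply (A2 w)) (at w)"
      and dA2: "\<And>w. (A2 has_derivative blinfun_apply (A3 w)) (at w)"
begin

definition lagrangian :: "'u \<Rightarrow> 'v \<Rightarrow> real"
  where "lagrangian w y = J w - ap1 (A w) y"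

definition lagrangian_deriv :: "'u \<Rightarrow> 'v \<Rightarrow> 'u \<Rightarrow> 'v \<Rightarrow> real"
  where "lagrangian_deriv w y e es = ap1 (J1 w) e - ap2 (A1 w) e y - ap1 (A w) es"

lemma R3_eq_trapezoidal_remainder:
  "R3 J3 A2 A3 ut zt e es =
     lagrangian (ut + e) (zt + es) - lagrangian ut zt
     - (lagrangian_deriv ut zt e es + lagrangian_deriv (ut + e) (zt + es) e es) / 2"
proof -
  define W where "W s = ut + s *\<^sub>R e" for s :: real
  define X where "X s = zt + s *\<^sub>R es" for s :: real
  define g where "g s = lagrangian (W s) (X s)" for s
  define g1 where "g1 s = lagrangian_deriv (W s) (X s) e es" for s
  define g2 where "g2 s = ap2 (J2 (W s)) e e - ap3 (A2 (W s)) e e (X s) - 2 * ap2 (A1 (W s)) e es" for s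
  define g3 where "g3 s = ap3 (J3 (W s)) e e e - ap4 (A3 (W s)) e e e (X s)
      - 3 * ap3 (A2 (W s)) e e es" for s
  have X: "(X has_vector_derivative es) (at s)" for s
    unfolding X_def by (auto intro!: derivative_eq_intros)
  have along_W: "((\<lambda>s. f (W s)) has_vector_derivative F' (W s) e) (at s)"
    if "\<And>w. (f has_derivative blinfun_apply (F' w)) (at w)"
    for f :: "'u \<Rightarrow> 'a::real_normed_vector" and F' s
    unfolding W_def by (rule has_vector_derivative_along_line[OF that])
  note along = along_W[OF dJ] along_W[OF dJ1] along_W[OF dJ2]
    along_W[OF dA] along_W[OF dA1] along_W[OF dA2]
  note defs = has_real_derivative_iff_has_vector_derivative lagrangian_def lagrangian_deriv_def
    ap1_def ap2_def ap3_def ap4_def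
  note rules = derivative_eq_intros blinfun.has_vector_derivative along X has_vector_derivative_const
    has_vector_derivative_mult_right refl
  have "(g has_real_derivative g1 s) (at s)" for s
    unfolding g_def g1_def defs by (rule rules)+ simp
  moreover have "(g1 has_real_derivative g2 s) (at s)" for s
    unfolding g1_def g2_def defs by (rule rules)+ simp
  moreover have "(g2 has_real_derivative g3 s) (at s)" for s
    unfolding g2_def g3_def defs by (rule rules)+ simp
  ultimately have "R3 J3 A2 A3 ut zt e es = g 1 - g 0 - (g1 0 + g1 1) / 2"
    unfolding R3_def g3_def W_def X_def by (rule trapezoidal_rule_remainder)
  then show ?thesis
    by (simp add: g_def g1_def W_def X_def)
qed

lemma goal_error_representation:
  assumes "ap1 (A w) y = 0" and "lagrangian_deriv w y (w - ut) (y - zt) = 0"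
  shows "J w - J ut =
     1/2 * (- ap1 (A ut) (y - zt)) + 1/2 * (ap1 (J1 ut) (w - ut) - ap2 (A1 ut) (w - ut) zt)
     - ap1 (A ut) zt + R3 J3 A2 A3 ut zt (w - ut) (y - zt)"
  using R3_eq_trapezoidal_remainder[of ut zt "w - ut" "y - zt"] assms
  by (simp add: lagrangian_def lagrangian_deriv_def field_simps)

end

theorem mainTheorem7:
  fixes J :: "'u::banach \<Rightarrow> real"
    and J1 :: "'u \<Rightarrow> ('u \<Rightarrow>\<^sub>L real)"
    and J2 :: "'u \<Rightarrow> ('u \<Rightarrow>\<^sub>L 'u \<Rightarrow>\<^sub>L real)"
    and J3 :: "'u \<Rightarrow> ('u \<Rightarrow>\<^sub>L 'u \<Rightarrow>\<^sub>L 'u \<Rightarrow>\<^sub>L real)"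
    and A :: "'u \<Rightarrow> ('v::banach \<Rightarrow>\<^sub>L real)"
    and A1 :: "'u \<Rightarrow> ('u \<Rightarrow>\<^sub>L 'v \<Rightarrow>\<^sub>L real)"
    and A2 :: "'u \<Rightarrow> ('u \<Rightarrow>\<^sub>L 'u \<Rightarrow>\<^sub>L 'v \<Rightarrow>\<^sub>L real)"
    and A3 :: "'u \<Rightarrow> ('u \<Rightarrow>\<^sub>L 'u \<Rightarrow>\<^sub>L 'u \<Rightarrow>\<^sub>L 'v \<Rightarrow>\<^sub>L real)"
    and Uh2 :: "'u set" and Vh2 :: "'v set"
    and u uh2 ut :: 'u and z zh2 zt :: 'v
  assumes dJ: "\<And>w. (J has_derivative blinfun_apply (J1 w)) (at w)"
      and dJ1: "\<And>w. (J1 has_derivative blinfun_apply (J2 w)) (at w)"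
      and dJ2: "\<And>w. (J2 has_derivative blinfun_apply (J3 w)) (at w)"
      and cJ3: "continuous_on UNIV J3"
      and dA: "\<And>w. (A has_derivative blinfun_apply (A1 w)) (at w)"
      and dA1: "\<And>w. (A1 has_derivative blinfun_apply (A2 w)) (at w)"
      and dA2: "\<And>w. (A2 has_derivative blinfun_apply (A3 w)) (at w)"
      and cA3: "continuous_on UNIV A3"
      and primal: "\<And>v. ap1 (A u) v = 0"
      and dual: "\<And>\<phi>. ap2 (A1 u) \<phi> z = ap1 (J1 u) \<phi>"
      and Uh2_fin: "subspace Uh2" "\<exists>B. finite B \<and> Uh2 = span B"
      and Vh2_fin: "subspace Vh2" "\<exists>B. finite B \<and> Vh2 = span B"
      and uh2_in: "uh2 \<in> Uh2"
      and primal_h: "\<And>v. v \<in> Vh2 \<Longrightarrow> ap1 (A uh2) v = 0"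
      and zh2_in: "zh2 \<in> Vh2"
      and dual_h: "\<And>\<phi>. \<phi> \<in> Uh2 \<Longrightarrow> ap2 (A1 uh2) \<phi> zh2 = ap1 (J1 uh2) \<phi>"
      and ut_in: "ut \<in> Uh2"
      and zt_in: "zt \<in> Vh2"
  shows
    "let \<rho> = (\<lambda>v. - ap1 (A ut) v);
         \<rho>s = (\<lambda>\<phi>. ap1 (J1 ut) \<phi> - ap2 (A1 ut) \<phi> zt);
         \<eta> = 1/2 * \<rho> (z - zt) + 1/2 * \<rho>s (u - ut);
         \<eta>2 = 1/2 * \<rho> (zh2 - zt) + 1/2 * \<rho>s (uh2 - ut);
         R = R3 J3 A2 A3 ut zt (u - ut) (z - zt);
         R2 = R3 J3 A2 A3 ut zt (uh2 - ut) (zh2 - zt)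
     in (\<bar>J u - J uh2\<bar> - \<bar>R - R2\<bar> \<le> \<bar>\<eta> - \<eta>2\<bar>
         \<and> \<bar>\<eta> - \<eta>2\<bar> \<le> \<bar>J u - J uh2\<bar> + \<bar>R - R2\<bar>)
      \<and> (\<bar>J u - J ut\<bar> - \<bar>\<rho> zt\<bar> - \<bar>R\<bar> \<le> \<bar>\<eta>\<bar>
         \<and> \<bar>\<eta>\<bar> \<le> \<bar>J u - J ut\<bar> + \<bar>\<rho> zt\<bar> + \<bar>R\<bar>)"
proof -
  interpret thrice_differentiable_lagrangian J J1 J2 J3 A A1 A2 A3
    by unfold_locales (fact dJ dJ1 dJ2 dA dA1 dA2)+
  have "lagrangian_deriv u z (u - ut) (z - zt) = 0"
    by (simp add: lagrangian_deriv_def primal dual)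
  note continuous_error = goal_error_representation[OF primal this]
  have "uh2 - ut \<in> Uh2" using Uh2_fin(1) uh2_in ut_in by (rule subspace_diff)
  moreover have "zh2 - zt \<in> Vh2" using Vh2_fin(1) zh2_in zt_in by (rule subspace_diff)
  ultimately have "lagrangian_deriv uh2 zh2 (uh2 - ut) (zh2 - zt) = 0"
    by (simp add: lagrangian_deriv_def primal_h dual_h)
  note discrete_error = goal_error_representation[OF primal_h[OF zh2_in] this]
  from continuous_error discrete_error show ?thesis
    unfolding Let_def by arith
qed

end
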